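(* Let $\mathcal{I}$ be an instance of $\mathrm{CSP}(\{r_1,r_2\})$ for basic Allen relations $r_1,r_2$, and let $G_\mathcal{I}$ be its arc-labelled graph. Then $\mathcal{I}$ is satisfiable if and only if $G_\mathcal{I}$ contains no bad cycle, where the bad cycles are as follows. (1) If $r_1=\mathsf{d}$ and $r_2=\mathsf{p}$: cycles in which all $\mathsf{p}$-arcs have the same direction and no two $\mathsf{d}$-arcs meet head-to-head. (2) If $r_1=\mathsf{d}$ and $r_2=\mathsf{o}$: cycles in which all $\mathsf{d}$-arcs have the same direction and all $\mathsf{o}$-arcs have the same direction (the common direction of the $\mathsf{d}$-arcs may differ from that of the $\mathsf{o}$-arcs). (3) If $r_1=\mathsf{o}$ and $r_2=\mathsf{p}$: (a) directed cycles of $\mathsf{o}$-arcs, and (b) cycles containing at least one $\mathsf{p}$-arc, in which (for a suitable traversal direction) all $\mathsf{p}$-arcs are forward and between any two $\mathsf{o}$-arcs in reverse direction that are consecutive among the reverse $\mathsf{o}$-arcs along the cycle there is a $\mathsf{p}$-arc (this includes directed cycles of $\mathsf{p}$-arcs). (4) If $r_1\in\{\mathsf{f},\mathsf{s}\}$ and $r_2\in\{\mathsf{d},\mathsf{o},\mathsf{p}\}$: (a) directed cycles of $r_1$-arcs, and (b) cycles with at least one $r_2$-arc in which all $r_2$-arcs have the same direction (the $r_1$-arcs may be directed arbitrarily).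
   Context: Allen's interval algebra has domain $\mathbb{I}=\{[a,b] : a,b\in\mathbb{Q},\ a<b\}$; for $I=[a,b]$ write $I^-=a$, $I^+=b$. Basic relations: $x\,\mathsf{p}\,y$ iff $x^+<y^-$; $x\,\mathsf{o}\,y$ iff $x^-<y^-<x^+<y^+$; $x\,\mathsf{d}\,y$ iff $y^-<x^-$ and $x^+<y^+$; $x\,\mathsf{s}\,y$ iff $x^-=y^-$ and $x^+<y^+$; $x\,\mathsf{f}\,y$ iff $x^+=y^+$ and $y^-<x^-$. An instance of $\mathrm{CSP}(\{r_1,r_2\})$ is a set of variables and constraints $x\,r\,y$ with $r\in\{r_1,r_2\}$; it is satisfiable if some assignment of intervals satisfies all constraints. The arc-labelled graph $G_\mathcal{I}$ has the variables as vertices and, for each constraint $u\,r\,v$, an arc $(u,v)$ labelled $r$ (an $r$-arc); parallel arcs and loops are allowed. A cycle is a sequence of distinct vertices $v_1,\dots,v_\ell$ ($\ell\ge1$) together with distinct arcs $a_1,\dots,a_\ell$ where $a_i$ joins $v_i$ and $v_{i+1}$ (indices mod $\ell$), i.e. a cycle of the underlying undirected multigraph (a loop or two parallel/antiparallel arcs form a cycle) with a traversal direction; $a_i$ is forward if it is $(v_i,v_{i+1})$ and reverse otherwise. Arcs "have the same direction" if they are all forward or all reverse; a directed cycle of $r$-arcs is a cycle consisting of $r$-arcs all of the same direction. Two arcs meet head-to-head if they are consecutive on the cycle and their common vertex is the head of both. *)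

theory Defs
  imports Main "HOL.Rat"
begin

datatype allen = Ap | Ao | Ad | As | Af

definition is_interval :: "rat \<times> rat \<Rightarrow> bool" where
  "is_interval x \<longleftrightarrow> fst x < snd x"

definition holds :: "allen \<Rightarrow> rat \<times> rat \<Rightarrow> rat \<times> rat \<Rightarrow> bool" where
  "holds r x y = (case r of
      Ap \<Rightarrow> snd x < fst y
    | Ao \<Rightarrow> fst x < fst y \<and> fst y < snd x \<and> snd x < snd y
    | Ad \<Rightarrow> fst y < fst x \<and> snd x < snd y
    | As \<Rightarrow> fst x = fst y \<and> snd x < snd y
    | Af \<Rightarrow> snd x = snd y \<and> fst y < fst x)"

text \<open>A constraint (u, r, v) means  u r v ; it is also the r-arc (u,v) of the graph.
  An instance is a finite set of constraints.\<close>

type_synonym 'v constr = "'v \<times> allen \<times> 'v"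

definition instance_of :: "allen \<Rightarrow> allen \<Rightarrow> 'v constr set \<Rightarrow> bool" where
  "instance_of r1 r2 C \<longleftrightarrow> finite C \<and> (\<forall>c\<in>C. fst (snd c) \<in> {r1, r2})"

definition satisfiable :: "'v constr set \<Rightarrow> bool" where
  "satisfiable C \<longleftrightarrow> (\<exists>f :: 'v \<Rightarrow> rat \<times> rat.
      (\<forall>v. is_interval (f v)) \<and> (\<forall>(u, r, w) \<in> C. holds r (f u) (f w)))"

definition lbl :: "'v constr \<Rightarrow> allen" where
  "lbl a = fst (snd a)"

definition joins :: "'v constr \<Rightarrow> 'v \<Rightarrow> 'v \<Rightarrow> bool" where
  "joins a x y \<longleftrightarrow> (fst a = x \<and> snd (snd a) = y) \<or> (fst a = y \<and> snd (snd a) = x)"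

definition is_cycle :: "'v constr set \<Rightarrow> 'v list \<Rightarrow> 'v constr list \<Rightarrow> bool" where
  "is_cycle C vs as \<longleftrightarrow> length vs \<ge> 1 \<and> length as = length vs \<and> distinct vs \<and> distinct as
     \<and> set as \<subseteq> C
     \<and> (\<forall>i < length vs. joins (as ! i) (vs ! i) (vs ! ((i + 1) mod length vs)))"

definition fwd :: "'v list \<Rightarrow> 'v constr list \<Rightarrow> nat \<Rightarrow> bool" where
  "fwd vs as i \<longleftrightarrow> fst (as ! i) = vs ! i \<and> snd (snd (as ! i)) = vs ! ((i + 1) mod length vs)"

definition same_dir :: "'v list \<Rightarrow> 'v constr list \<Rightarrow> allen \<Rightarrow> bool" where
  "same_dir vs as r \<longleftrightarrow>
     (\<forall>i < length as. lbl (as ! i) = r \<longrightarrow> fwd vs as i) \<or>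
     (\<forall>i < length as. lbl (as ! i) = r \<longrightarrow> \<not> fwd vs as i)"

definition has_lbl :: "'v constr list \<Rightarrow> allen \<Rightarrow> bool" where
  "has_lbl as r \<longleftrightarrow> (\<exists>i < length as. lbl (as ! i) = r)"

definition directed_cycle_of :: "'v list \<Rightarrow> 'v constr list \<Rightarrow> allen \<Rightarrow> bool" where
  "directed_cycle_of vs as r \<longleftrightarrow> (\<forall>i < length as. lbl (as ! i) = r) \<and> same_dir vs as r"

definition head_to_head :: "'v list \<Rightarrow> 'v constr list \<Rightarrow> allen \<Rightarrow> bool" where
  "head_to_head vs as r \<longleftrightarrow> length as \<ge> 2 \<and>
     (\<exists>i < length as. lbl (as ! i) = r \<and> lbl (as ! ((i + 1) mod length as)) = r
        \<and> fwd vs as i \<and> \<not> fwd vs as ((i + 1) mod length as))"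

text \<open>The gap from a reverse o-arc at position i to the next one at
  position (i+d) mod l has length d, 0 < d <= l (d = l if it is the only one).\<close>

definition p_between_rev_o :: "'v list \<Rightarrow> 'v constr list \<Rightarrow> bool" where
  "p_between_rev_o vs as \<longleftrightarrow>
     (let l = length as; revO = (\<lambda>j. lbl (as ! j) = Ao \<and> \<not> fwd vs as j) in
      \<forall>i < l. \<forall>d. 0 < d \<and> d \<le> l \<and> revO i \<and> revO ((i + d) mod l)
           \<and> (\<forall>k. 0 < k \<and> k < d \<longrightarrow> \<not> revO ((i + k) mod l))
        \<longrightarrow> (\<exists>k. 0 < k \<and> k < d \<and> lbl (as ! ((i + k) mod l)) = Ap))"

definition bad_cycle :: "allen \<Rightarrow> allen \<Rightarrow> 'v list \<Rightarrow> 'v constr list \<Rightarrow> bool" where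
  "bad_cycle r1 r2 vs as \<longleftrightarrow>
     (if r1 = Ad \<and> r2 = Ap then
        same_dir vs as Ap \<and> \<not> head_to_head vs as Ad
      else if r1 = Ad \<and> r2 = Ao then
        same_dir vs as Ad \<and> same_dir vs as Ao
      else if r1 = Ao \<and> r2 = Ap then
        directed_cycle_of vs as Ao \<or>
        (has_lbl as Ap \<and> (\<forall>i < length as. lbl (as ! i) = Ap \<longrightarrow> fwd vs as i)
          \<and> p_between_rev_o vs as)
      else if r1 \<in> {Af, As} \<and> r2 \<in> {Ad, Ao, Ap} then
        directed_cycle_of vs as r1 \<or> (has_lbl as r2 \<and> same_dir vs as r2)
      else False)"

end

theory Submission
  imports Defs
begin

(*
  Every basic relation fixes the order of the four endpoints of its two intervals, so an instance
  is a system of weak and strict inequalities between endpoints. Such a system is solvable iff the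
  graph of these inequalities has no closed walk through a strict one, and then counting strict
  predecessors gives a solution. A shortest strict closed walk meets every variable at most once,
  so it runs around a cycle of the instance choosing an endpoint at each vertex (a chain), and
  conversely a chain around a cycle is a strict closed walk. A case analysis of the endpoint orders
  of the two relations shows that a cycle carries a chain, in one of its two traversal directions,
  exactly when it is bad.
*)

section \<open>Endpoint encoding of the basic relations\<close>

definition endpoint :: "rat \<times> rat \<Rightarrow> bool \<Rightarrow> rat" where
  "endpoint X s = (if s then snd X else fst X)"

text \<open>\<open>forced_le r fw s t st\<close> says: an \<open>r\<close>-arc traversed forwards (\<open>fw\<close>) or backwards
  forces endpoint \<open>s\<close> of the vertex it leaves to lie below endpoint \<open>t\<close> of the vertex it
  enters, strictly iff \<open>st\<close> (\<open>True\<close> selects the right endpoint).\<close>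

definition forced_le :: "allen \<Rightarrow> bool \<Rightarrow> bool \<Rightarrow> bool \<Rightarrow> bool \<Rightarrow> bool" where
  "forced_le r fw s t st = (case r of
      Ap \<Rightarrow> fw \<and> st
    | Ao \<Rightarrow> (if fw then (s \<longrightarrow> t) \<and> st else \<not> s \<and> t \<and> st)
    | Ad \<Rightarrow> (if fw then t \<and> st else \<not> s \<and> st)
    | As \<Rightarrow> (if fw then (\<not> s \<and> st = t) \<or> (t \<and> st) else \<not> s \<and> st = t)
    | Af \<Rightarrow> (if fw then t \<and> st = (\<not> s) else (t \<and> st = (\<not> s)) \<or> (\<not> s \<and> st)))"

lemma forced_le_sound:
  assumes "holds r X Y" "is_interval X" "is_interval Y"
  shows "forced_le r True s t st \<Longrightarrow>
      endpoint X s \<le> endpoint Y t \<and> (st \<longrightarrow> endpoint X s < endpoint Y t)"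
    and "forced_le r False s t st \<Longrightarrow>
      endpoint Y s \<le> endpoint X t \<and> (st \<longrightarrow> endpoint Y s < endpoint X t)"
  using assms by (cases r; cases s; cases t; cases st;
      auto simp: forced_le_def holds_def endpoint_def is_interval_def)+

lemma holds_if_forced_le:
  assumes "is_interval X" "is_interval Y"
    and fwd: "\<And>s t st. forced_le r True s t st \<Longrightarrow>
      endpoint X s \<le> endpoint Y t \<and> (st \<longrightarrow> endpoint X s < endpoint Y t)"
    and bwd: "\<And>s t st. forced_le r False s t st \<Longrightarrow>
      endpoint Y s \<le> endpoint X t \<and> (st \<longrightarrow> endpoint Y s < endpoint X t)"
  shows "holds r X Y"
proof (cases r)
  case Ap
  then show ?thesis using fwd[of True False True]
    by (auto simp: forced_le_def holds_def endpoint_def)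
next
  case Ao
  then show ?thesis using fwd[of False False True] fwd[of True True True] bwd[of False True True]
    by (auto simp: forced_le_def holds_def endpoint_def)
next
  case Ad
  then show ?thesis using fwd[of True True True] bwd[of False False True]
    by (auto simp: forced_le_def holds_def endpoint_def)
next
  case As
  then show ?thesis using fwd[of False False False] fwd[of True True True] bwd[of False False False]
    by (force simp: forced_le_def holds_def endpoint_def)
next
  case Af
  then show ?thesis using fwd[of True True False] bwd[of True True False] bwd[of False False True]
    by (force simp: forced_le_def holds_def endpoint_def)
qed

text \<open>As \<open>X\<^sup>- < X\<^sup>+\<close>, leaving from a left instead of a right endpoint, or arriving at a right
  instead of a left one, makes a step strict.\<close>

lemma forced_le_from_left: "forced_le r fw True t st \<Longrightarrow> forced_le r fw False t True"
  by (cases r; cases fw; cases t) (auto simp: forced_le_def)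

lemma forced_le_to_right: "forced_le r fw s False st \<Longrightarrow> forced_le r fw s True True"
  by (cases r; cases fw; cases s) (auto simp: forced_le_def)

lemma forced_le_right_to_left_strict: "forced_le r fw True False st \<Longrightarrow> st"
  by (cases r; cases fw) (auto simp: forced_le_def)

lemma forced_le_fwd_bwd_not_strict:
  "forced_le r True s t st1 \<Longrightarrow> forced_le r False t s st2 \<Longrightarrow> \<not> st1 \<and> \<not> st2"
  by (cases r; cases s; cases t) (auto simp: forced_le_def)


section \<open>Closed chains\<close>

definition closed_chain :: "nat \<Rightarrow> (nat \<Rightarrow> 'a \<Rightarrow> 'a \<Rightarrow> bool \<Rightarrow> bool) \<Rightarrow> (nat \<Rightarrow> 'a) \<Rightarrow> bool" where
  "closed_chain l R \<sigma> \<longleftrightarrow> \<sigma> l = \<sigma> 0 \<and> (\<forall>i<l. \<exists>st. R i (\<sigma> i) (\<sigma> (Suc i)) st) \<and>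
    (\<exists>i<l. R i (\<sigma> i) (\<sigma> (Suc i)) True)"

lemma closed_chainI:
  assumes "\<sigma> l = \<sigma> 0" "\<And>i. i < l \<Longrightarrow> R i (\<sigma> i) (\<sigma> (Suc i)) (P i)" "i0 < l" "P i0"
  shows "closed_chain l R \<sigma>"
  unfolding closed_chain_def using assms by (metis (full_types))

lemma closed_chain_pos: "closed_chain l R \<sigma> \<Longrightarrow> 0 < l"
  unfolding closed_chain_def by auto

lemma closed_chain_step: "closed_chain l R \<sigma> \<Longrightarrow> i < l \<Longrightarrow> \<exists>st. R i (\<sigma> i) (\<sigma> (Suc i)) st"
  unfolding closed_chain_def by blast

lemma closed_chain_wrap:
  assumes "closed_chain l R \<sigma>" "i < l"
  shows "\<sigma> (Suc i mod l) = \<sigma> (Suc i)"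
proof (cases "Suc i = l")
  case True
  then show ?thesis using assms(1) unfolding closed_chain_def by simp
qed (use assms(2) in simp)

lemma cyclic_mono_const:
  fixes g :: "nat \<Rightarrow> 'a::order"
  assumes mono: "\<And>i. i < l \<Longrightarrow> g i \<le> g (Suc i)" and "g l = g 0" "i \<le> l"
  shows "g i = g 0"
proof (rule order.antisym)
  have "g i \<le> g l"
    by (rule lift_Suc_mono_le_ivl[of "{..<l}"]) (use mono assms(3) in auto)
  then show "g i \<le> g 0" using assms(2) by simp
  show "g 0 \<le> g i"
    by (rule lift_Suc_mono_le_ivl[of "{..<l}"]) (use mono assms(3) in auto)
qed

lemma closed_chain_no_potential:
  fixes G :: "nat \<Rightarrow> 'a \<Rightarrow> 'b::order"
  assumes chain: "closed_chain l R \<sigma>" and "G l = G 0"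
    and pot: "\<And>i x y st. i < l \<Longrightarrow> R i x y st \<Longrightarrow> G i x \<le> G (Suc i) y \<and> (st \<longrightarrow> G i x < G (Suc i) y)"
  shows False
proof -
  define g where "g i = G i (\<sigma> i)" for i
  have mono: "g i \<le> g (Suc i)" if "i < l" for i
    using closed_chain_step[OF chain that] pot that unfolding g_def by blast
  have "g l = g 0" using chain \<open>G l = G 0\<close> unfolding closed_chain_def g_def by simp
  then have const: "g i = g 0" if "i \<le> l" for i
    using cyclic_mono_const[of l g] mono that by blast
  obtain i where "i < l" "R i (\<sigma> i) (\<sigma> (Suc i)) True"
    using chain unfolding closed_chain_def by blast
  then have "g i < g (Suc i)" using pot unfolding g_def by blast
  with const[of i] const[of "Suc i"] \<open>i < l\<close> show False by simp
qed

lemma closed_chain_rotate: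
  assumes chain: "closed_chain l R \<sigma>" and "p < l"
  shows "closed_chain l (\<lambda>k. R ((k + p) mod l)) (\<lambda>k. \<sigma> ((k + p) mod l))"
proof -
  have l_pos: "0 < l" using closed_chain_pos[OF chain] .
  have wrap: "\<sigma> ((Suc k + p) mod l) = \<sigma> (Suc ((k + p) mod l))" for k
    using closed_chain_wrap[OF chain, of "(k + p) mod l"] l_pos by (simp add: mod_Suc_eq)
  obtain i where i: "i < l" "R i (\<sigma> i) (\<sigma> (Suc i)) True"
    using chain unfolding closed_chain_def by blast
  define k where "k = (i + (l - p)) mod l"
  have k: "k < l" "(k + p) mod l = i"
    using l_pos \<open>p < l\<close> i(1) unfolding k_def by (auto simp: mod_add_left_eq)
  show ?thesis
    unfolding closed_chain_def wrap
  proof (intro conjI)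
    show "\<forall>j<l. \<exists>st. R ((j + p) mod l) (\<sigma> ((j + p) mod l)) (\<sigma> (Suc ((j + p) mod l))) st"
      using closed_chain_step[OF chain] l_pos by simp
    show "\<exists>j<l. R ((j + p) mod l) (\<sigma> ((j + p) mod l)) (\<sigma> (Suc ((j + p) mod l))) True"
      using k i by metis
  qed simp
qed

lemma closed_chain_split:
  assumes chain: "closed_chain l R \<sigma>" and q: "0 < q" "q < l" "\<sigma> q = \<sigma> 0"
  shows "closed_chain q R \<sigma> \<or> closed_chain (l - q) (\<lambda>k. R (k + q)) (\<lambda>k. \<sigma> (k + q))"
proof -
  obtain i where i: "i < l" "R i (\<sigma> i) (\<sigma> (Suc i)) True"
    using chain unfolding closed_chain_def by blast
  show ?thesis
  proof (cases "i < q")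
    case True
    then show ?thesis using chain q i unfolding closed_chain_def by auto
  next
    case False
    have "closed_chain (l - q) (\<lambda>k. R (k + q)) (\<lambda>k. \<sigma> (k + q))"
      unfolding closed_chain_def
    proof (intro conjI)
      show "\<sigma> (l - q + q) = \<sigma> (0 + q)" using chain q unfolding closed_chain_def by simp
      show "\<forall>j<l - q. \<exists>st. R (j + q) (\<sigma> (j + q)) (\<sigma> (Suc j + q)) st"
        using closed_chain_step[OF chain] by simp
      show "\<exists>j<l - q. R (j + q) (\<sigma> (j + q)) (\<sigma> (Suc j + q)) True"
        using i False by (intro exI[of _ "i - q"]) auto
    qed
    then show ?thesis by blast
  qed
qed

section \<open>Potentials for relations without strict cycles\<close>

definition strict_preds :: "'a rel \<Rightarrow> 'a rel \<Rightarrow> 'a \<Rightarrow> 'a set" where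
  "strict_preds R S x = {y. (y, x) \<in> R\<^sup>* O S O R\<^sup>*}"

lemma strict_preds_subset_Domain:
  assumes "S \<subseteq> R"
  shows "strict_preds R S x \<subseteq> Domain R"
proof
  fix y assume "y \<in> strict_preds R S x"
  then obtain y1 z1 where "(y, y1) \<in> R\<^sup>*" "(y1, z1) \<in> S"
    unfolding strict_preds_def by blast
  then show "y \<in> Domain R"
    using assms by (cases rule: converse_rtranclE) auto
qed

lemma strict_preds_mono: "(x, z) \<in> R \<Longrightarrow> strict_preds R S x \<subseteq> strict_preds R S z"
  unfolding strict_preds_def by (auto intro: rtrancl_into_rtrancl)

lemma strict_preds_strict_mono:
  assumes "S \<subseteq> R" "x \<notin> strict_preds R S x" "(x, z) \<in> S"
  shows "strict_preds R S x \<subset> strict_preds R S z"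
proof -
  have "strict_preds R S x \<subseteq> strict_preds R S z"
    using assms(1,3) by (intro strict_preds_mono) blast
  moreover have "x \<in> strict_preds R S z"
    using assms(3) unfolding strict_preds_def by auto
  ultimately show ?thesis using assms(2) by blast
qed

lemma strict_preds_dominated:
  assumes "S \<subseteq> R" and dom: "\<And>z. (z, x) \<in> R \<Longrightarrow> (z, y) \<in> S"
  shows "strict_preds R S x \<subseteq> strict_preds R S y"
proof
  fix w assume "w \<in> strict_preds R S x"
  then obtain w1 z1 where w: "(w, w1) \<in> R\<^sup>*" "(w1, z1) \<in> S" "(z1, x) \<in> R\<^sup>*"
    unfolding strict_preds_def by blast
  from w(3) show "w \<in> strict_preds R S y"
  proof (cases rule: rtranclE)
    case base
    then have "(w1, y) \<in> S" using w(2) assms(1) dom by blast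
    then show ?thesis using w(1) unfolding strict_preds_def by blast
  next
    case (step m)
    then have "(m, y) \<in> R" using dom assms(1) by blast
    then have "(z1, y) \<in> R\<^sup>*" by (rule rtrancl_into_rtrancl[OF step(1)])
    then show ?thesis using w(1,2) unfolding strict_preds_def by blast
  qed
qed

section \<open>The endpoint graph of an instance\<close>

definition endpoint_edge :: "'v constr \<Rightarrow> 'v \<times> bool \<Rightarrow> 'v \<times> bool \<Rightarrow> bool \<Rightarrow> bool" where
  "endpoint_edge a x y st \<longleftrightarrow>
    (fst x = fst a \<and> fst y = snd (snd a) \<and> forced_le (lbl a) True (snd x) (snd y) st) \<or>
    (fst x = snd (snd a) \<and> fst y = fst a \<and> forced_le (lbl a) False (snd x) (snd y) st)"

lemma endpoint_edge_from_left: "endpoint_edge a (v, True) y st \<Longrightarrow> endpoint_edge a (v, False) y True"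
  unfolding endpoint_edge_def using forced_le_from_left by fastforce

lemma endpoint_edge_to_right: "endpoint_edge a x (v, False) st \<Longrightarrow> endpoint_edge a x (v, True) True"
  unfolding endpoint_edge_def using forced_le_to_right by fastforce

lemma endpoint_edge_right_to_left_strict: "endpoint_edge a x y st \<Longrightarrow> snd x \<Longrightarrow> \<not> snd y \<Longrightarrow> st"
  unfolding endpoint_edge_def using forced_le_right_to_left_strict by (metis (full_types))

lemma endpoint_edge_joins: "endpoint_edge a x y st \<Longrightarrow> joins a (fst x) (fst y)"
  unfolding endpoint_edge_def joins_def by auto

lemma endpoint_edge_back_not_strict:
  "endpoint_edge a x y st1 \<Longrightarrow> endpoint_edge a y x st2 \<Longrightarrow> fst x \<noteq> fst y \<Longrightarrow> \<not> st1"
  unfolding endpoint_edge_def using forced_le_fwd_bwd_not_strict by metis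

definition strict_closed_walk ::
    "'v constr set \<Rightarrow> nat \<Rightarrow> (nat \<Rightarrow> 'v \<times> bool) \<Rightarrow> (nat \<Rightarrow> 'v constr) \<Rightarrow> bool" where
  "strict_closed_walk C l n a \<longleftrightarrow> (\<forall>i<l. a i \<in> C) \<and> closed_chain l (\<lambda>i. endpoint_edge (a i)) n"

lemma strict_closed_walk_if_path:
  assumes path: "(z, y) \<in> {(x, y). \<exists>a\<in>C. \<exists>st. endpoint_edge a x y st}\<^sup>*"
    and "a0 \<in> C" "endpoint_edge a0 y z True"
  shows "\<exists>l n a. strict_closed_walk C l n a"
proof -
  obtain k where "(z, y) \<in> {(x, y). \<exists>a\<in>C. \<exists>st. endpoint_edge a x y st} ^^ k"
    using path rtrancl_power by blast
  then obtain p where p: "p 0 = z" "p k = y"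
    "\<forall>i<k. \<exists>a\<in>C. \<exists>st. endpoint_edge a (p i) (p (Suc i)) st"
    by (auto simp: relpow_fun_conv)
  then obtain b where b: "\<forall>i<k. b i \<in> C \<and> (\<exists>st. endpoint_edge (b i) (p i) (p (Suc i)) st)"
    by metis
  define n where "n i = (if i \<le> k then p i else z)" for i
  define a where "a i = (if i < k then b i else a0)" for i
  have "strict_closed_walk C (Suc k) n a"
    unfolding strict_closed_walk_def closed_chain_def
  proof (intro conjI)
    show "n (Suc k) = n 0" using p by (simp add: n_def)
    show "\<forall>i<Suc k. a i \<in> C"
      using b assms(2) by (auto simp: a_def)
    show "\<forall>i<Suc k. \<exists>st. endpoint_edge (a i) (n i) (n (Suc i)) st"
      using b assms(3) p by (auto simp: n_def a_def less_Suc_eq)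
    show "\<exists>i<Suc k. endpoint_edge (a i) (n i) (n (Suc i)) True"
      using assms(3) p by (intro exI[of _ k]) (auto simp: n_def a_def)
  qed
  then show ?thesis by blast
qed

text \<open>The number of strict predecessors of a node is a potential on the endpoint graph; doubling it
  and adding one at right endpoints makes it strictly increasing from left to right endpoints.\<close>

lemma endpoint_potential_if_no_strict_closed_walk:
  fixes C :: "'v constr set"
  assumes fin: "finite C" and no_walk: "\<nexists>l n a. strict_closed_walk C l n a"
  obtains val :: "'v \<times> bool \<Rightarrow> nat"
  where "\<And>a x y st. a \<in> C \<Longrightarrow> endpoint_edge a x y st \<Longrightarrow> val x \<le> val y \<and> (st \<longrightarrow> val x < val y)"
    and "\<And>v. val (v, False) < val (v, True)"
proof -
  define R where "R = {(x, y). \<exists>a\<in>C. \<exists>st. endpoint_edge a x y st}"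
  define S where "S = {(x, y). \<exists>a\<in>C. endpoint_edge a x y True}"
  define g where "g x = card (strict_preds R S x)" for x
  have SR: "S \<subseteq> R" unfolding S_def R_def by auto
  have "Domain R \<subseteq> (fst ` C \<union> (\<lambda>a. snd (snd a)) ` C) \<times> UNIV"
    unfolding R_def by (force dest: endpoint_edge_joins simp: joins_def)
  then have finite_preds: "finite (strict_preds R S x)" for x
    using strict_preds_subset_Domain[OF SR] fin by (meson finite_SigmaI finite_Un finite_imageI
        finite_UNIV finite_subset)
  have irrefl: "x \<notin> strict_preds R S x" for x
  proof
    assume "x \<in> strict_preds R S x"
    then obtain y z where xy: "(x, y) \<in> R\<^sup>*" and yz: "(y, z) \<in> S" and zx: "(z, x) \<in> R\<^sup>*"
      unfolding strict_preds_def by blast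
    from zx xy have "(z, y) \<in> R\<^sup>*" by (rule rtrancl_trans)
    moreover obtain a0 where "a0 \<in> C" "endpoint_edge a0 y z True"
      using yz unfolding S_def by blast
    ultimately show False
      using strict_closed_walk_if_path no_walk unfolding R_def by blast
  qed
  have g_mono: "g x \<le> g z" if "(x, z) \<in> R" for x z
    unfolding g_def using strict_preds_mono[OF that] finite_preds by (rule card_mono[rotated])
  have g_strict: "g x < g z" if "(x, z) \<in> S" for x z
    unfolding g_def using strict_preds_strict_mono[OF SR irrefl that] finite_preds
    by (rule psubset_card_mono[rotated])
  have g_interval: "g (v, False) \<le> g (v, True)" for v
  proof -
    have "(z, (v, True)) \<in> S" if "(z, (v, False)) \<in> R" for z
      using that endpoint_edge_to_right unfolding R_def S_def by fast
    then show ?thesis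
      unfolding g_def using strict_preds_dominated[OF SR] finite_preds by (metis card_mono)
  qed
  define val where "val x = 2 * g x + of_bool (snd x)" for x
  show ?thesis
  proof
    fix a x y st assume a: "a \<in> C" and edge: "endpoint_edge a x y st"
    then have R: "(x, y) \<in> R" and S: "st \<Longrightarrow> (x, y) \<in> S" unfolding R_def S_def by auto
    have "snd x \<and> \<not> snd y \<Longrightarrow> (x, y) \<in> S"
      using a edge endpoint_edge_right_to_left_strict unfolding S_def by fastforce
    then show "val x \<le> val y \<and> (st \<longrightarrow> val x < val y)"
      using g_mono[OF R] g_strict[of x y] S unfolding val_def by (cases "snd x"; cases "snd y") auto
  next
    show "val (v, False) < val (v, True)" for v using g_interval[of v] unfolding val_def by simp
  qed
qed

theorem satisfiable_if_no_strict_closed_walk: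
  fixes C :: "'v constr set"
  assumes "finite C" and "\<nexists>l n a. strict_closed_walk C l n a"
  shows "satisfiable C"
proof -
  obtain val :: "'v \<times> bool \<Rightarrow> nat"
    where val: "\<And>a x y st. a \<in> C \<Longrightarrow> endpoint_edge a x y st \<Longrightarrow> val x \<le> val y \<and> (st \<longrightarrow> val x < val y)"
      and interval: "\<And>v. val (v, False) < val (v, True)"
    using endpoint_potential_if_no_strict_closed_walk[OF assms] by blast
  define f :: "'v \<Rightarrow> rat \<times> rat" where "f v = (of_nat (val (v, False)), of_nat (val (v, True)))" for v
  have endpoint_f: "endpoint (f v) s = of_nat (val (v, s))" for v s
    unfolding f_def endpoint_def by simp
  have intv: "is_interval (f v)" for v
    using interval[of v] unfolding is_interval_def f_def by simp
  have "holds r (f u) (f w)" if "(u, r, w) \<in> C" for u r w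
  proof (rule holds_if_forced_le[OF intv intv])
    fix s t st assume "forced_le r True s t st"
    then have "endpoint_edge (u, r, w) (u, s) (w, t) st"
      unfolding endpoint_edge_def lbl_def by simp
    then show "endpoint (f u) s \<le> endpoint (f w) t \<and> (st \<longrightarrow> endpoint (f u) s < endpoint (f w) t)"
      using val[OF that] unfolding endpoint_f by simp
  next
    fix s t st assume "forced_le r False s t st"
    then have "endpoint_edge (u, r, w) (w, s) (u, t) st"
      unfolding endpoint_edge_def lbl_def by simp
    then show "endpoint (f w) s \<le> endpoint (f u) t \<and> (st \<longrightarrow> endpoint (f w) s < endpoint (f u) t)"
      using val[OF that] unfolding endpoint_f by simp
  qed
  then show ?thesis unfolding satisfiable_def using intv by blast
qed

section \<open>Shortest strict closed walks\<close>

definition shortest_strict_closed_walk ::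
    "'v constr set \<Rightarrow> nat \<Rightarrow> (nat \<Rightarrow> 'v \<times> bool) \<Rightarrow> (nat \<Rightarrow> 'v constr) \<Rightarrow> bool" where
  "shortest_strict_closed_walk C l n a \<longleftrightarrow> strict_closed_walk C l n a \<and>
    (\<forall>l' n' a'. strict_closed_walk C l' n' a' \<longrightarrow> l \<le> l')"

lemma shortest_strict_closed_walk_exists:
  assumes "strict_closed_walk C l n a"
  shows "\<exists>l n a. shortest_strict_closed_walk C l n a"
proof -
  define P where "P l \<longleftrightarrow> (\<exists>n a. strict_closed_walk C l n a)" for l
  have "P (LEAST l. P l)" using assms by (intro LeastI[of P l]) (auto simp: P_def)
  moreover have "P l' \<Longrightarrow> (LEAST l. P l) \<le> l'" for l' by (rule Least_le)
  ultimately show ?thesis unfolding shortest_strict_closed_walk_def P_def by blast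
qed

lemma strict_closed_walk_rotate:
  assumes "strict_closed_walk C l n a" "p < l"
  shows "strict_closed_walk C l (\<lambda>k. n ((k + p) mod l)) (\<lambda>k. a ((k + p) mod l))"
  using assms closed_chain_rotate[of l "\<lambda>i. endpoint_edge (a i)" n p] closed_chain_pos
  unfolding strict_closed_walk_def by auto

lemma strict_closed_walk_split:
  assumes "strict_closed_walk C l n a" "0 < q" "q < l" "n q = n 0"
  shows "strict_closed_walk C q n a \<or> strict_closed_walk C (l - q) (\<lambda>k. n (k + q)) (\<lambda>k. a (k + q))"
  using assms closed_chain_split[of l "\<lambda>i. endpoint_edge (a i)" n q]
  unfolding strict_closed_walk_def by auto

text \<open>Leaving from the left endpoint instead of the right one is a strict step.\<close>

lemma strict_closed_walk_shortcut:
  assumes walk: "strict_closed_walk C l n a"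
    and q: "0 < q" "q < l" "n 0 = (v, True)" "n q = (v, False)"
  shows "strict_closed_walk C q (n(0 := (v, False))) a"
proof -
  obtain st where "endpoint_edge (a 0) (v, True) (n (Suc 0)) st"
    using walk closed_chain_step[of l _ n 0] q unfolding strict_closed_walk_def by fastforce
  then have first: "endpoint_edge (a 0) (v, False) (n (Suc 0)) True"
    by (rule endpoint_edge_from_left)
  show ?thesis
    unfolding strict_closed_walk_def
  proof
    show "\<forall>i<q. a i \<in> C" using walk q unfolding strict_closed_walk_def by simp
    show "closed_chain q (\<lambda>i. endpoint_edge (a i)) (n(0 := (v, False)))"
      unfolding closed_chain_def
      using walk q first closed_chain_step[of l "\<lambda>i. endpoint_edge (a i)" n]
      unfolding strict_closed_walk_def by (auto intro!: exI[of _ 0])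
  qed
qed

text \<open>Rotate the walk to start at the first of two visits of a vertex. Returning to the same
  endpoint splits the walk into two shorter closed walks, one of them strict; returning to the
  other endpoint admits a shortcut, after a second rotation if the walk started on the left.\<close>

lemma shortest_strict_closed_walk_vertices_inj:
  assumes shortest: "shortest_strict_closed_walk C l n a" and ij: "i < j" "j < l"
  shows "fst (n i) \<noteq> fst (n j)"
proof
  assume eq: "fst (n i) = fst (n j)"
  have walk: "strict_closed_walk C l n a"
    and min: "\<And>l' n' a'. strict_closed_walk C l' n' a' \<Longrightarrow> l \<le> l'"
    using shortest unfolding shortest_strict_closed_walk_def by auto
  define n1 where "n1 = (\<lambda>k. n ((k + i) mod l))"
  define q where "q = j - i"
  have walk1: "strict_closed_walk C l n1 (\<lambda>k. a ((k + i) mod l))"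
    unfolding n1_def using strict_closed_walk_rotate[OF walk] ij by simp
  have q: "0 < q" "q < l" using ij unfolding q_def by auto
  obtain v s t where n1: "n1 0 = (v, s)" "n1 q = (v, t)"
    using eq ij unfolding n1_def q_def by (metis add.commute le_add_diff_inverse less_imp_le
        mod_less order.strict_trans prod.collapse add_0)
  consider "s = t" | "s" "\<not> t" | "\<not> s" "t" by blast
  then show False
  proof cases
    case 1
    then have "n1 q = n1 0" using n1 by simp
    then show False
      using strict_closed_walk_split[OF walk1 q] min[of q] min[of "l - q"] q by fastforce
  next
    case 2
    then have "strict_closed_walk C q (n1(0 := (v, False))) (\<lambda>k. a ((k + i) mod l))"
      using n1 by (intro strict_closed_walk_shortcut[OF walk1 q]) auto
    then show False using min q(2) by fastforce
  next
    case 3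
    define n2 where "n2 = (\<lambda>k. n1 ((k + q) mod l))"
    have "strict_closed_walk C l n2 (\<lambda>k. a (((k + q) mod l + i) mod l))"
      unfolding n2_def using strict_closed_walk_rotate[OF walk1 q(2)] by simp
    moreover have "n2 0 = (v, True)" "n2 (l - q) = (v, False)"
      using n1 3 q unfolding n2_def by auto
    ultimately have "strict_closed_walk C (l - q) (n2(0 := (v, False)))
        (\<lambda>k. a (((k + q) mod l + i) mod l))"
      using q by (intro strict_closed_walk_shortcut) auto
    then show False using min q by fastforce
  qed
qed

text \<open>An arc used twice would have to be used back and forth on a walk of length two,
  and then neither step could be strict.\<close>

lemma shortest_strict_closed_walk_arcs_inj:
  assumes shortest: "shortest_strict_closed_walk C l n a" and ij: "i < j" "j < l"
  shows "a i \<noteq> a j"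
proof
  assume eq: "a i = a j"
  define V where "V k = fst (n k)" for k
  have walk: "closed_chain l (\<lambda>i. endpoint_edge (a i)) n"
    using shortest unfolding shortest_strict_closed_walk_def strict_closed_walk_def by simp
  have inj: "V i' \<noteq> V j'" if "i' < j'" "j' < l" for i' j'
    using shortest_strict_closed_walk_vertices_inj[OF shortest that] unfolding V_def .
  have V_l: "V l = V 0" using walk unfolding closed_chain_def V_def by simp
  have joins: "joins (a k) (V k) (V (Suc k))" if "k < l" for k
    using closed_chain_step[OF walk that] endpoint_edge_joins unfolding V_def by blast
  have "{V i, V (Suc i)} = {V j, V (Suc j)}"
    using joins[of i] joins[of j] ij eq unfolding joins_def by auto
  moreover have "V i \<noteq> V j" using inj ij by simp
  ultimately have A: "V i = V (Suc j)" and B: "V (Suc i) = V j"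
    by (auto simp: doubleton_eq_iff)
  have "j = Suc i" using B inj[of "Suc i" j] ij by (cases "Suc i < j") auto
  have "Suc j = l"
    using A inj[of i "Suc j"] ij by (cases "Suc j < l") auto
  then have "i = 0" using A V_l inj[of 0 i] ij by (cases "i = 0") auto
  then have l2: "l = 2" "j = 1" using \<open>Suc j = l\<close> \<open>j = Suc i\<close> by auto
  have n2: "n 2 = n 0" using walk l2 unfolding closed_chain_def by simp
  obtain s0 s1 where s0: "endpoint_edge (a 0) (n 0) (n 1) s0"
    and s1: "endpoint_edge (a 0) (n 1) (n 0) s1"
    using closed_chain_step[OF walk, of 0] closed_chain_step[OF walk, of 1] l2 eq \<open>i = 0\<close> n2
    by (auto simp: numeral_2_eq_2)
  have d: "fst (n 0) \<noteq> fst (n 1)" using inj[of 0 1] l2 unfolding V_def by simp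
  obtain k where "k < 2" "endpoint_edge (a k) (n k) (n (Suc k)) True"
    using walk l2 unfolding closed_chain_def by blast
  then show False
    using s0 s1 d endpoint_edge_back_not_strict l2 eq \<open>i = 0\<close> n2
    by (metis One_nat_def less_2_cases numeral_2_eq_2)
qed

section \<open>Chains along cycles\<close>

text \<open>\<open>\<sigma> i\<close> selects an endpoint of the \<open>i\<close>-th vertex of a cycle. A forward chain is a strict closed
  walk in the endpoint graph that runs around the cycle in its traversal direction, a backward
  chain one that runs around it the other way.\<close>

definition fwd_chain :: "'v list \<Rightarrow> 'v constr list \<Rightarrow> (nat \<Rightarrow> bool) \<Rightarrow> bool" where
  "fwd_chain vs as \<sigma> \<longleftrightarrow>
    closed_chain (length as) (\<lambda>i. forced_le (lbl (as ! i)) (fwd vs as i)) \<sigma>"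

definition bwd_chain :: "'v list \<Rightarrow> 'v constr list \<Rightarrow> (nat \<Rightarrow> bool) \<Rightarrow> bool" where
  "bwd_chain vs as \<sigma> \<longleftrightarrow>
    closed_chain (length as) (\<lambda>i s t. forced_le (lbl (as ! i)) (\<not> fwd vs as i) t s) \<sigma>"

lemma is_cycle_length: "is_cycle C vs as \<Longrightarrow> length vs = length as \<and> 0 < length as"
  unfolding is_cycle_def by auto

lemma is_cycle_labels:
  assumes "instance_of r1 r2 C" "is_cycle C vs as" "i < length as"
  shows "lbl (as ! i) \<in> {r1, r2}"
proof -
  have "as ! i \<in> C" using assms(2,3) unfolding is_cycle_def by auto
  then show ?thesis using assms(1) unfolding instance_of_def lbl_def by auto
qed

lemma forced_le_along_cycle:
  assumes cyc: "is_cycle C vs as" and i: "i < length as"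
    and f: "\<forall>(u, r, w) \<in> C. holds r (f u) (f w)" "\<forall>v. is_interval (f v)"
  defines "x \<equiv> f (vs ! i)" and "y \<equiv> f (vs ! (Suc i mod length as))"
  shows "forced_le (lbl (as ! i)) (fwd vs as i) s t st \<Longrightarrow>
      endpoint x s \<le> endpoint y t \<and> (st \<longrightarrow> endpoint x s < endpoint y t)"
    and "forced_le (lbl (as ! i)) (\<not> fwd vs as i) t s st \<Longrightarrow>
      endpoint y t \<le> endpoint x s \<and> (st \<longrightarrow> endpoint y t < endpoint x s)"
proof -
  obtain u r w where a: "as ! i = (u, r, w)" by (metis prod.collapse)
  then have r: "lbl (as ! i) = r" unfolding lbl_def by simp
  have "as ! i \<in> C" using cyc i unfolding is_cycle_def by auto
  then have hold: "holds r (f u) (f w)" using f(1) a by auto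
  note sound = forced_le_sound[OF hold f(2)[rule_format] f(2)[rule_format]]
  have "joins (as ! i) (vs ! i) (vs ! (Suc i mod length as))"
    using cyc i is_cycle_length[OF cyc] unfolding is_cycle_def by auto
  then have ends: "u = vs ! i \<and> w = vs ! (Suc i mod length as) \<or>
      u = vs ! (Suc i mod length as) \<and> w = vs ! i"
    unfolding joins_def a by auto
  have "fwd vs as i \<longleftrightarrow> u = vs ! i \<and> w = vs ! (Suc i mod length as)"
    using is_cycle_length[OF cyc] unfolding fwd_def a by simp
  then consider "fwd vs as i" "f u = x" "f w = y" | "\<not> fwd vs as i" "f u = y" "f w = x"
    using ends unfolding x_def y_def by (cases "fwd vs as i") auto
  note cases = this
  show "endpoint x s \<le> endpoint y t \<and> (st \<longrightarrow> endpoint x s < endpoint y t)"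
    if "forced_le (lbl (as ! i)) (fwd vs as i) s t st"
  proof (cases rule: cases)
    case 1
    then show ?thesis using that sound(1)[of s t st] r by simp
  next
    case 2
    then show ?thesis using that sound(2)[of s t st] r by simp
  qed
  show "endpoint y t \<le> endpoint x s \<and> (st \<longrightarrow> endpoint y t < endpoint x s)"
    if "forced_le (lbl (as ! i)) (\<not> fwd vs as i) t s st"
  proof (cases rule: cases)
    case 1
    then show ?thesis using that sound(2)[of t s st] r by simp
  next
    case 2
    then show ?thesis using that sound(1)[of t s st] r by simp
  qed
qed

theorem no_chain_if_satisfiable:
  assumes "satisfiable C" and cyc: "is_cycle C vs as"
  shows "\<not> fwd_chain vs as \<sigma>" and "\<not> bwd_chain vs as \<sigma>"
proof -
  obtain f where f: "\<forall>v. is_interval (f v)" "\<forall>(u, r, w) \<in> C. holds r (f u) (f w)"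
    using assms(1) unfolding satisfiable_def by blast
  define G where "G i s = endpoint (f (vs ! (i mod length as))) s" for i s
  have G_wrap: "G (length as) = G 0" unfolding G_def by simp
  have G_step: "G i = endpoint (f (vs ! i))" "G (Suc i) = endpoint (f (vs ! (Suc i mod length as)))"
    if "i < length as" for i
    using that unfolding G_def by auto
  show "\<not> fwd_chain vs as \<sigma>"
  proof
    assume "fwd_chain vs as \<sigma>"
    then show False
      unfolding fwd_chain_def
    proof (rule closed_chain_no_potential[OF _ G_wrap])
      fix i s t st
      assume "i < length as" "forced_le (lbl (as ! i)) (fwd vs as i) s t st"
      then show "G i s \<le> G (Suc i) t \<and> (st \<longrightarrow> G i s < G (Suc i) t)"
        unfolding G_step[OF \<open>i < length as\<close>] by (rule forced_le_along_cycle(1)[OF cyc _ f(2,1)])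
    qed
  qed
  show "\<not> bwd_chain vs as \<sigma>"
  proof
    assume "bwd_chain vs as \<sigma>"
    then show False
      unfolding bwd_chain_def
    proof (rule closed_chain_no_potential[where G = "\<lambda>i s. - G i s"])
      show "(\<lambda>s. - G (length as) s) = (\<lambda>s. - G 0 s)" using G_wrap by simp
      fix i s t st
      assume "i < length as" "forced_le (lbl (as ! i)) (\<not> fwd vs as i) t s st"
      then show "- G i s \<le> - G (Suc i) t \<and> (st \<longrightarrow> - G i s < - G (Suc i) t)"
        unfolding G_step[OF \<open>i < length as\<close>] neg_le_iff_le neg_less_iff_less
        by (rule forced_le_along_cycle(2)[OF cyc _ f(2,1)])
    qed
  qed
qed

lemma shortest_strict_closed_walk_cycle:
  assumes shortest: "shortest_strict_closed_walk C l n a"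
  shows "is_cycle C (map (\<lambda>i. fst (n i)) [0..<l]) (map a [0..<l])"
proof -
  define V where "V k = fst (n k)" for k
  have walk: "closed_chain l (\<lambda>i. endpoint_edge (a i)) n" and in_C: "\<forall>i<l. a i \<in> C"
    using shortest unfolding shortest_strict_closed_walk_def strict_closed_walk_def by auto
  have "inj_on V {0..<l}" "inj_on a {0..<l}"
    using shortest_strict_closed_walk_vertices_inj[OF shortest]
      shortest_strict_closed_walk_arcs_inj[OF shortest]
    unfolding inj_on_def V_def by (metis atLeastLessThan_iff linorder_neqE_nat)+
  then have "distinct (map V [0..<l])" "distinct (map a [0..<l])" by (simp_all add: distinct_map)
  moreover have "joins (a i) (V i) (V (Suc i mod l))" if "i < l" for i
    using closed_chain_step[OF walk that] closed_chain_wrap[OF walk that] endpoint_edge_joins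
    unfolding V_def by metis
  ultimately show ?thesis
    using closed_chain_pos[OF walk] in_C unfolding is_cycle_def V_def by auto
qed

lemma shortest_strict_closed_walk_fwd_chain:
  assumes shortest: "shortest_strict_closed_walk C l n a" and "2 \<le> l"
  defines "vs \<equiv> map (\<lambda>i. fst (n i)) [0..<l]" and "as \<equiv> map a [0..<l]"
  shows "fwd_chain vs as (\<lambda>i. snd (n i))"
proof -
  define V where "V k = fst (n k)" for k
  have walk: "closed_chain l (\<lambda>i. endpoint_edge (a i)) n"
    using shortest unfolding shortest_strict_closed_walk_def strict_closed_walk_def by auto
  have inj: "V i \<noteq> V j" if "i < j" "j < l" for i j
    using shortest_strict_closed_walk_vertices_inj[OF shortest that] unfolding V_def .
  have V_l: "V l = V 0" using walk unfolding closed_chain_def V_def by simp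
  have step: "forced_le (lbl (as ! i)) (fwd vs as i) (snd (n i)) (snd (n (Suc i))) st"
    if i: "i < l" and edge: "endpoint_edge (a i) (n i) (n (Suc i)) st" for i st
  proof -
    have ne: "V (Suc i) \<noteq> V i"
    proof (cases "Suc i < l")
      case True
      then show ?thesis using inj[of i "Suc i"] by auto
    next
      case False
      then have "Suc i = l" "0 < i" using i \<open>2 \<le> l\<close> by auto
      then show ?thesis using inj[of 0 i] V_l i by auto
    qed
    have fwd_iff: "fwd vs as i \<longleftrightarrow> fst (a i) = V i \<and> snd (snd (a i)) = V (Suc i)"
      using i closed_chain_wrap[OF walk i] unfolding fwd_def vs_def as_def V_def
      by (auto simp: mod_Suc)
    from edge consider
        "fst (a i) = V i" "snd (snd (a i)) = V (Suc i)"
          "forced_le (lbl (a i)) True (snd (n i)) (snd (n (Suc i))) st"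
      | "snd (snd (a i)) = V i" "fst (a i) = V (Suc i)"
          "forced_le (lbl (a i)) False (snd (n i)) (snd (n (Suc i))) st"
      unfolding endpoint_edge_def V_def by metis
    then show ?thesis
      by cases (use fwd_iff ne i in \<open>simp_all add: as_def\<close>)
  qed
  have "\<forall>i<l. \<exists>st. forced_le (lbl (as ! i)) (fwd vs as i) (snd (n i)) (snd (n (Suc i))) st"
    using closed_chain_step[OF walk] step by blast
  moreover obtain i where "i < l" "endpoint_edge (a i) (n i) (n (Suc i)) True"
    using walk unfolding closed_chain_def by blast
  moreover have "snd (n l) = snd (n 0)" using walk unfolding closed_chain_def by simp
  ultimately show ?thesis
    unfolding fwd_chain_def closed_chain_def as_def using step by (auto simp: as_def)
qed


section \<open>Bad cycles are exactly the cycles carrying a chain\<close>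

lemma forced_le_Ap: "forced_le Ap fw s t st \<Longrightarrow> fw \<and> st"
  by (simp add: forced_le_def)

lemma forced_le_mono_unless_Ap: "forced_le r fw s t st \<Longrightarrow> r \<noteq> Ap \<Longrightarrow> s \<le> t"
  by (cases r; cases fw) (auto simp: forced_le_def)

lemma forced_le_Ad_fwd: "forced_le Ad True s t st \<Longrightarrow> t"
  by (simp add: forced_le_def)

lemma forced_le_Ad_bwd: "forced_le Ad False s t st \<Longrightarrow> \<not> s"
  by (simp add: forced_le_def)

lemma forced_le_const:
  assumes "forced_le r fw c c st"
  shows "r = Ad \<Longrightarrow> fw = c" and "r = Ao \<Longrightarrow> fw"
    and "r = As \<Longrightarrow> (c \<longrightarrow> fw) \<and> (st \<longrightarrow> c)" and "r = Af \<Longrightarrow> (\<not> c \<longrightarrow> \<not> fw) \<and> (st \<longrightarrow> \<not> c)"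
  using assms by (cases fw; cases c; auto simp: forced_le_def)+

lemma fwd_chain_step:
  "fwd_chain vs as \<sigma> \<Longrightarrow> i < length as \<Longrightarrow>
    \<exists>st. forced_le (lbl (as ! i)) (fwd vs as i) (\<sigma> i) (\<sigma> (Suc i)) st"
  unfolding fwd_chain_def by (rule closed_chain_step)

lemma fwd_chain_step_mod:
  assumes "fwd_chain vs as \<sigma>"
  defines "l \<equiv> length as"
  shows "\<exists>st. forced_le (lbl (as ! (j mod l))) (fwd vs as (j mod l))
      (\<sigma> (j mod l)) (\<sigma> (Suc j mod l)) st"
proof -
  have "0 < l" using assms closed_chain_pos unfolding fwd_chain_def by blast
  then have "j mod l < l" by simp
  moreover have "\<sigma> (Suc j mod l) = \<sigma> (Suc (j mod l))"
    using closed_chain_wrap[of l _ \<sigma> "j mod l"] assms \<open>j mod l < l\<close>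
    unfolding fwd_chain_def by (simp add: mod_Suc_eq)
  ultimately show ?thesis using fwd_chain_step[OF assms(1)] unfolding l_def by simp
qed

lemma fwd_chain_Ap_fwd:
  "fwd_chain vs as \<sigma> \<Longrightarrow> i < length as \<Longrightarrow> lbl (as ! i) = Ap \<Longrightarrow> fwd vs as i"
proof -
  assume "fwd_chain vs as \<sigma>" "i < length as" "lbl (as ! i) = Ap"
  then obtain st where "forced_le Ap (fwd vs as i) (\<sigma> i) (\<sigma> (Suc i)) st"
    using fwd_chain_step by metis
  then show "fwd vs as i" using forced_le_Ap by blast
qed

text \<open>Only p-arcs lead from a right endpoint to a left one, so without them a chain is constant.\<close>

lemma fwd_chain_const:
  assumes chain: "fwd_chain vs as \<sigma>" and no_p: "\<forall>i<length as. lbl (as ! i) \<noteq> Ap"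
  shows "fwd_chain vs as (\<lambda>_. \<sigma> 0)"
proof -
  have mono: "\<sigma> i \<le> \<sigma> (Suc i)" if i: "i < length as" for i
  proof -
    obtain st where "forced_le (lbl (as ! i)) (fwd vs as i) (\<sigma> i) (\<sigma> (Suc i)) st"
      using fwd_chain_step[OF chain i] ..
    then show ?thesis by (rule forced_le_mono_unless_Ap) (use no_p i in simp)
  qed
  have wrap: "\<sigma> (length as) = \<sigma> 0" using chain unfolding fwd_chain_def closed_chain_def by simp
  have const_upto: "\<sigma> i = \<sigma> 0" if "i \<le> length as" for i
    by (rule cyclic_mono_const[where g = \<sigma>, OF mono wrap that])
  have const: "\<sigma> i = \<sigma> 0" "\<sigma> (Suc i) = \<sigma> 0" if "i < length as" for i
    using const_upto[of i] const_upto[of "Suc i"] that by simp_all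
  obtain i0 where "i0 < length as"
      "forced_le (lbl (as ! i0)) (fwd vs as i0) (\<sigma> i0) (\<sigma> (Suc i0)) True"
    using chain unfolding fwd_chain_def closed_chain_def by blast
  then have "\<exists>i<length as. forced_le (lbl (as ! i)) (fwd vs as i) (\<sigma> 0) (\<sigma> 0) True"
    using const[of i0] by auto
  moreover have "\<forall>i<length as. \<exists>st. forced_le (lbl (as ! i)) (fwd vs as i) (\<sigma> 0) (\<sigma> 0) st"
  proof (intro allI impI)
    fix i assume i: "i < length as"
    then obtain st where "forced_le (lbl (as ! i)) (fwd vs as i) (\<sigma> i) (\<sigma> (Suc i)) st"
      using fwd_chain_step[OF chain] by blast
    then show "\<exists>st. forced_le (lbl (as ! i)) (fwd vs as i) (\<sigma> 0) (\<sigma> 0) st"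
      using const[OF i] by auto
  qed
  ultimately show ?thesis unfolding fwd_chain_def closed_chain_def by simp
qed

lemma const_fwd_chainI:
  assumes "0 < length as" "\<And>i. i < length as \<Longrightarrow> forced_le (lbl (as ! i)) (fwd vs as i) c c True"
  shows "fwd_chain vs as (\<lambda>_. c)"
  unfolding fwd_chain_def by (rule closed_chainI[where P = "\<lambda>_. True"]) (use assms in auto)

lemma const_bwd_chainI:
  assumes "0 < length as" "\<And>i. i < length as \<Longrightarrow> forced_le (lbl (as ! i)) (\<not> fwd vs as i) c c True"
  shows "bwd_chain vs as (\<lambda>_. c)"
  unfolding bwd_chain_def by (rule closed_chainI[where P = "\<lambda>_. True"]) (use assms in auto)

lemma head_to_headI:
  assumes "i < length as" "lbl (as ! i) = r" "lbl (as ! ((i + 1) mod length as)) = r"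
    and "fwd vs as i" "\<not> fwd vs as ((i + 1) mod length as)"
  shows "head_to_head vs as r"
proof -
  have "length as \<noteq> 1" using assms(1,4,5) by auto
  then show ?thesis unfolding head_to_head_def using assms by auto
qed

text \<open>With all p-arcs forward, go to the right endpoint exactly after a forward d-arc.\<close>

lemma fwd_chain_if_p_fwd_no_d_head_to_head:
  assumes lab: "\<forall>i<length as. lbl (as ! i) \<in> {Ad, Ap}" and nonempty: "0 < length as"
    and p_fwd: "\<forall>i<length as. lbl (as ! i) = Ap \<longrightarrow> fwd vs as i"
    and no_h2h: "\<not> head_to_head vs as Ad"
  shows "\<exists>\<sigma>. fwd_chain vs as \<sigma>"
proof -
  define l where "l = length as"
  define D where "D j \<longleftrightarrow> lbl (as ! j) = Ad \<and> fwd vs as j" for j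
  define \<sigma> where "\<sigma> i = (case i of 0 \<Rightarrow> D (l - 1) | Suc j \<Rightarrow> D j)" for i
  have "fwd_chain vs as \<sigma>"
    unfolding fwd_chain_def l_def[symmetric]
  proof (rule closed_chainI[where P = "\<lambda>_. True"])
    show "\<sigma> l = \<sigma> 0" using nonempty unfolding \<sigma>_def l_def by (cases "length as") auto
    show "0 < l" using nonempty unfolding l_def .
  next
    fix i assume i: "i < l"
    show "forced_le (lbl (as ! i)) (fwd vs as i) (\<sigma> i) (\<sigma> (Suc i)) True"
    proof (cases "lbl (as ! i) = Ap")
      case True
      then show ?thesis using p_fwd i unfolding l_def by (simp add: forced_le_def)
    next
      case False
      then have d: "lbl (as ! i) = Ad" using lab i unfolding l_def by auto
      show ?thesis
      proof (cases "fwd vs as i")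
        case True
        then show ?thesis using d unfolding \<sigma>_def D_def by (simp add: forced_le_def)
      next
        case False
        define j where "j = (if i = 0 then l - 1 else i - 1)"
        have j: "j < l" "(j + 1) mod l = i" "\<sigma> i = D j"
          using i unfolding j_def \<sigma>_def by (auto split: nat.split)
        have "\<not> D j"
          using head_to_headI[of j as Ad vs] no_h2h j d False unfolding D_def l_def by auto
        then show ?thesis using d False j(3) by (simp add: forced_le_def)
      qed
    qed
  qed simp
  then show ?thesis by blast
qed

text \<open>With all p-arcs reverse, run backwards and sit at the right endpoint exactly before a
  reverse d-arc.\<close>

lemma bwd_chain_if_p_rev_no_d_head_to_head:
  assumes lab: "\<forall>i<length as. lbl (as ! i) \<in> {Ad, Ap}" and nonempty: "0 < length as"
    and p_rev: "\<forall>i<length as. lbl (as ! i) = Ap \<longrightarrow> \<not> fwd vs as i"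
    and no_h2h: "\<not> head_to_head vs as Ad"
  shows "\<exists>\<sigma>. bwd_chain vs as \<sigma>"
proof -
  define l where "l = length as"
  define \<sigma> where "\<sigma> i \<longleftrightarrow> lbl (as ! (i mod l)) = Ad \<and> \<not> fwd vs as (i mod l)" for i
  have "bwd_chain vs as \<sigma>"
    unfolding bwd_chain_def l_def[symmetric]
  proof (rule closed_chainI[where P = "\<lambda>_. True"])
    show "\<sigma> l = \<sigma> 0" unfolding \<sigma>_def by simp
    show "0 < l" using nonempty unfolding l_def .
  next
    fix i assume i: "i < l"
    show "forced_le (lbl (as ! i)) (\<not> fwd vs as i) (\<sigma> (Suc i)) (\<sigma> i) True"
    proof (cases "lbl (as ! i) = Ap")
      case True
      then show ?thesis using p_rev i unfolding l_def by (simp add: forced_le_def)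
    next
      case False
      then have d: "lbl (as ! i) = Ad" using lab i unfolding l_def by auto
      show ?thesis
      proof (cases "fwd vs as i")
        case False
        then show ?thesis using d i unfolding \<sigma>_def by (simp add: forced_le_def)
      next
        case True
        have "\<not> \<sigma> (Suc i)"
          using head_to_headI[of i as Ad vs] no_h2h i d True unfolding \<sigma>_def l_def by auto
        then show ?thesis using d True by (simp add: forced_le_def)
      qed
    qed
  qed simp
  then show ?thesis by blast
qed

lemma p_fwd_no_d_head_to_head_if_fwd_chain:
  assumes lab: "\<forall>i<length as. lbl (as ! i) \<in> {Ad, Ap}" and chain: "fwd_chain vs as \<sigma>"
  shows "same_dir vs as Ap \<and> \<not> head_to_head vs as Ad"
proof
  show "same_dir vs as Ap"
    unfolding same_dir_def using fwd_chain_Ap_fwd[OF chain] by blast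
  show "\<not> head_to_head vs as Ad"
  proof
    assume "head_to_head vs as Ad"
    then obtain i where i: "i < length as" "lbl (as ! i) = Ad" "fwd vs as i"
      and next_i: "lbl (as ! ((i + 1) mod length as)) = Ad" "\<not> fwd vs as ((i + 1) mod length as)"
      unfolding head_to_head_def by blast
    obtain st where "forced_le Ad True (\<sigma> i) (\<sigma> (Suc i)) st"
      using fwd_chain_step[OF chain i(1)] i by auto
    then have "\<sigma> (Suc i)" by (rule forced_le_Ad_fwd)
    obtain st' where "forced_le Ad False (\<sigma> (Suc i mod length as))
        (\<sigma> (Suc (Suc i) mod length as)) st'"
      using fwd_chain_step_mod[OF chain, of "Suc i"] next_i by auto
    then have "\<not> \<sigma> (Suc i mod length as)" by (rule forced_le_Ad_bwd)
    moreover have "\<sigma> (Suc i mod length as) = \<sigma> (Suc i)"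
      using chain i(1) closed_chain_wrap unfolding fwd_chain_def by blast
    ultimately show False using \<open>\<sigma> (Suc i)\<close> by simp
  qed
qed

lemma chain_if_d_same_dir_o_same_dir:
  assumes lab: "\<forall>i<length as. lbl (as ! i) \<in> {Ad, Ao}" and nonempty: "0 < length as"
    and d_dir: "same_dir vs as Ad" and o_dir: "same_dir vs as Ao"
  shows "\<exists>\<sigma>. fwd_chain vs as \<sigma> \<or> bwd_chain vs as \<sigma>"
proof -
  obtain c where c: "\<forall>i<length as. lbl (as ! i) = Ad \<longrightarrow> fwd vs as i = c"
    using d_dir unfolding same_dir_def by (metis (full_types))
  have lab': "lbl (as ! i) = Ad \<or> lbl (as ! i) = Ao" if "i < length as" for i
    using lab that by auto
  from o_dir consider "\<forall>i<length as. lbl (as ! i) = Ao \<longrightarrow> fwd vs as i"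
    | "\<forall>i<length as. lbl (as ! i) = Ao \<longrightarrow> \<not> fwd vs as i"
    unfolding same_dir_def by blast
  then show ?thesis
  proof cases
    case 1
    have "fwd_chain vs as (\<lambda>_. c)"
    proof (rule const_fwd_chainI[OF nonempty])
      fix i assume "i < length as"
      then show "forced_le (lbl (as ! i)) (fwd vs as i) c c True"
        using lab'[of i] c 1 by (auto simp: forced_le_def)
    qed
    then show ?thesis by blast
  next
    case 2
    have "bwd_chain vs as (\<lambda>_. \<not> c)"
    proof (rule const_bwd_chainI[OF nonempty])
      fix i assume "i < length as"
      then show "forced_le (lbl (as ! i)) (\<not> fwd vs as i) (\<not> c) (\<not> c) True"
        using lab'[of i] c 2 by (auto simp: forced_le_def)
    qed
    then show ?thesis by blast
  qed
qed

lemma same_dir_d_o_if_const_fwd_chain: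
  assumes chain: "fwd_chain vs as (\<lambda>_. c)"
  shows "same_dir vs as Ad \<and> same_dir vs as Ao"
proof -
  have "\<exists>st. forced_le (lbl (as ! i)) (fwd vs as i) c c st" if "i < length as" for i
    using fwd_chain_step[OF chain that] .
  then have "lbl (as ! i) = Ad \<longrightarrow> fwd vs as i = c" "lbl (as ! i) = Ao \<longrightarrow> fwd vs as i"
    if "i < length as" for i
    using forced_le_const(1,2) that by blast+
  then show ?thesis unfolding same_dir_def by (cases c) auto
qed

lemma d_same_dir_o_same_dir_if_fwd_chain:
  assumes lab: "\<forall>i<length as. lbl (as ! i) \<in> {Ad, Ao}" and chain: "fwd_chain vs as \<sigma>"
  shows "same_dir vs as Ad \<and> same_dir vs as Ao"
proof -
  have "\<forall>i<length as. lbl (as ! i) \<noteq> Ap" using lab by auto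
  then show ?thesis by (rule same_dir_d_o_if_const_fwd_chain[OF fwd_chain_const[OF chain]])
qed

lemma chain_if_directed_cycle:
  assumes "r \<in> {Ao, As, Af}" and nonempty: "0 < length as" and dir: "directed_cycle_of vs as r"
  shows "\<exists>\<sigma>. fwd_chain vs as \<sigma> \<or> bwd_chain vs as \<sigma>"
proof -
  have all_r: "\<forall>i<length as. lbl (as ! i) = r" using dir unfolding directed_cycle_of_def by simp
  from dir consider "\<forall>i<length as. fwd vs as i" | "\<forall>i<length as. \<not> fwd vs as i"
    unfolding directed_cycle_of_def same_dir_def using all_r by blast
  then show ?thesis
  proof cases
    case 1
    have "fwd_chain vs as (\<lambda>_. True)" if "r \<noteq> Af"
      by (rule const_fwd_chainI[OF nonempty])
        (use assms(1) all_r 1 that in \<open>auto simp: forced_le_def\<close>)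
    moreover have "bwd_chain vs as (\<lambda>_. False)" if "r = Af"
      by (rule const_bwd_chainI[OF nonempty]) (use all_r 1 that in \<open>auto simp: forced_le_def\<close>)
    ultimately show ?thesis by blast
  next
    case 2
    have "bwd_chain vs as (\<lambda>_. True)" if "r \<noteq> Af"
      by (rule const_bwd_chainI[OF nonempty])
        (use assms(1) all_r 2 that in \<open>auto simp: forced_le_def\<close>)
    moreover have "fwd_chain vs as (\<lambda>_. False)" if "r = Af"
      by (rule const_fwd_chainI[OF nonempty]) (use all_r 2 that in \<open>auto simp: forced_le_def\<close>)
    ultimately show ?thesis by blast
  qed
qed

text \<open>With all p-arcs forward, look ahead to the first arc that is a p-arc or a reverse o-arc and
  be at the right endpoint iff it is a p-arc: reverse o-arcs then lead from a left to a right
  endpoint precisely because a p-arc separates them from the next reverse o-arc.\<close>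

lemma fwd_chain_if_p_fwd_p_between_rev_o:
  assumes lab: "\<forall>i<length as. lbl (as ! i) \<in> {Ao, Ap}" and p: "has_lbl as Ap"
    and p_fwd: "\<forall>i<length as. lbl (as ! i) = Ap \<longrightarrow> fwd vs as i"
    and between: "p_between_rev_o vs as"
  shows "\<exists>\<sigma>. fwd_chain vs as \<sigma>"
proof -
  define l where "l = length as"
  define rev_o where "rev_o j \<longleftrightarrow> lbl (as ! j) = Ao \<and> \<not> fwd vs as j" for j
  define special where "special j \<longleftrightarrow> lbl (as ! (j mod l)) = Ap \<or> rev_o (j mod l)" for j
  define first where "first i = (LEAST k. special (i + k))" for i
  define \<sigma> where "\<sigma> i \<longleftrightarrow> lbl (as ! ((i + first i) mod l)) = Ap" for i
  obtain p0 where p0: "p0 < l" "lbl (as ! p0) = Ap" using p unfolding has_lbl_def l_def by blast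
  have l_pos: "0 < l" using p0 by simp
  have first: "special (i + first i)" "first i < l" for i
  proof -
    define k where "k = (p0 + l - i mod l) mod l"
    have "(i + k) mod l = (i mod l + (p0 + l - i mod l)) mod l"
      unfolding k_def by (simp add: mod_add_left_eq mod_add_right_eq)
    also have "i mod l + (p0 + l - i mod l) = p0 + l"
      using mod_less_divisor[OF l_pos, of i] by linarith
    finally have "(i + k) mod l = p0" using p0(1) by simp
    then have "special (i + k)" using p0 unfolding special_def by simp
    then show "special (i + first i)" "first i < l"
      unfolding first_def using Least_le[of "\<lambda>k. special (i + k)" k] l_pos
      by (auto intro: LeastI order.strict_trans1 simp: k_def)
  qed
  have before_first: "\<not> special (i + m)" if "m < first i" for i m
    using not_less_Least that unfolding first_def by blast
  have "fwd_chain vs as \<sigma>"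
    unfolding fwd_chain_def l_def[symmetric]
  proof (rule closed_chainI[where P = "\<lambda>_. True"])
    have "special (l + k) = special k" for k unfolding special_def by simp
    then show "\<sigma> l = \<sigma> 0" unfolding \<sigma>_def first_def by simp
    show "0 < l" by (rule l_pos)
  next
    fix i assume i: "i < l"
    show "forced_le (lbl (as ! i)) (fwd vs as i) (\<sigma> i) (\<sigma> (Suc i)) True"
    proof (cases "lbl (as ! i) = Ap")
      case True
      then show ?thesis using p_fwd i unfolding l_def by (simp add: forced_le_def)
    next
      case False
      then have o: "lbl (as ! i) = Ao" using lab i unfolding l_def by auto
      show ?thesis
      proof (cases "fwd vs as i")
        case True
        then have "\<not> special (i + 0)" using i o unfolding special_def rev_o_def by simp
        then have "first i = Suc (first (Suc i))"
          unfolding first_def using first(1)[of i] Least_Suc[of "\<lambda>k. special (i + k)"]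
          by (simp add: first_def)
        then have "\<sigma> i = \<sigma> (Suc i)" unfolding \<sigma>_def by simp
        then show ?thesis using o True by (simp add: forced_le_def)
      next
        case False
        then have "special (i + 0)" using i o unfolding special_def rev_o_def by simp
        then have "first i = 0" unfolding first_def by (simp add: Least_eq_0)
        then have "\<not> \<sigma> i" using i o unfolding \<sigma>_def by simp
        moreover have "\<sigma> (Suc i)"
        proof (rule ccontr)
          assume "\<not> \<sigma> (Suc i)"
          define d where "d = Suc (first (Suc i))"
          have "(i + d) mod l = (Suc i + first (Suc i)) mod l" unfolding d_def by simp
          then have rev_d: "rev_o ((i + d) mod l)"
            using first(1)[of "Suc i"] \<open>\<not> \<sigma> (Suc i)\<close> unfolding special_def \<sigma>_def by simp
          have gap: "\<not> special (i + m)" if "0 < m" "m < d" for m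
            using before_first[of "m - 1" "Suc i"] that unfolding d_def by simp
          have "0 < d" "d \<le> l" using first(2)[of "Suc i"] unfolding d_def by auto
          then obtain m where "0 < m" "m < d" "lbl (as ! ((i + m) mod l)) = Ap"
            using between i rev_d gap \<open>\<not> fwd vs as i\<close> o
            unfolding p_between_rev_o_def Let_def l_def[symmetric] special_def rev_o_def by blast
          then show False using gap unfolding special_def by simp
        qed
        ultimately show ?thesis using o False by (simp add: forced_le_def)
      qed
    qed
  qed simp
  then show ?thesis by blast
qed

text \<open>A reverse o-arc leads to a right endpoint and forward o-arcs keep it there, so the next
  reverse o-arc, which must leave from a left endpoint, can only be reached across a p-arc.\<close>

lemma p_between_rev_o_if_fwd_chain:
  assumes lab: "\<forall>i<length as. lbl (as ! i) \<in> {Ao, Ap}" and chain: "fwd_chain vs as \<sigma>"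
  shows "p_between_rev_o vs as"
  unfolding p_between_rev_o_def Let_def
proof (intro allI impI)
  define l where "l = length as"
  fix i d
  assume i: "i < length as"
    and h: "0 < d \<and> d \<le> length as \<and> (lbl (as ! i) = Ao \<and> \<not> fwd vs as i) \<and>
      (lbl (as ! ((i + d) mod length as)) = Ao \<and> \<not> fwd vs as ((i + d) mod length as)) \<and>
      (\<forall>k. 0 < k \<and> k < d \<longrightarrow>
        \<not> (lbl (as ! ((i + k) mod length as)) = Ao \<and> \<not> fwd vs as ((i + k) mod length as)))"
  show "\<exists>k. 0 < k \<and> k < d \<and> lbl (as ! ((i + k) mod length as)) = Ap"
  proof (rule ccontr)
    assume no_p: "\<not> ?thesis"
    have "0 < l" using i unfolding l_def by linarith
    have fwd_o: "lbl (as ! ((i + k) mod l)) = Ao \<and> fwd vs as ((i + k) mod l)"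
      if "0 < k" "k < d" for k
      using h no_p lab mod_less_divisor[OF \<open>0 < l\<close>, of "i + k"] that unfolding l_def by blast
    have right: "\<sigma> ((i + k) mod l)" if "0 < k" "k \<le> d" for k
      using that
    proof (induction k)
      case (Suc k)
      obtain st where st: "forced_le (lbl (as ! ((i + k) mod l))) (fwd vs as ((i + k) mod l))
          (\<sigma> ((i + k) mod l)) (\<sigma> (Suc (i + k) mod l)) st"
        using fwd_chain_step_mod[OF chain, of "i + k"] unfolding l_def by blast
      show ?case
      proof (cases "k = 0")
        case True
        then show ?thesis using st h i unfolding l_def by (simp add: forced_le_def)
      next
        case False
        then show ?thesis using st Suc fwd_o[of k] by (simp add: forced_le_def)
      qed
    qed simp
    obtain st where "forced_le (lbl (as ! ((i + d) mod l))) (fwd vs as ((i + d) mod l))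
        (\<sigma> ((i + d) mod l)) (\<sigma> (Suc (i + d) mod l)) st"
      using fwd_chain_step_mod[OF chain, of "i + d"] unfolding l_def by blast
    then show False using right[of d] h unfolding l_def by (simp add: forced_le_def)
  qed
qed

lemma bad_cycle_o_p_if_fwd_chain:
  assumes lab: "\<forall>i<length as. lbl (as ! i) \<in> {Ao, Ap}" and chain: "fwd_chain vs as \<sigma>"
  shows "bad_cycle Ao Ap vs as"
proof (cases "has_lbl as Ap")
  case True
  then show ?thesis
    using fwd_chain_Ap_fwd[OF chain] p_between_rev_o_if_fwd_chain[OF lab chain]
    unfolding bad_cycle_def by simp
next
  case False
  then have all_o: "\<forall>i<length as. lbl (as ! i) = Ao" using lab unfolding has_lbl_def by auto
  then have "fwd_chain vs as (\<lambda>_. \<sigma> 0)" by (intro fwd_chain_const[OF chain]) auto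
  then have "fwd vs as i" if "i < length as" for i
    using fwd_chain_step[of vs as _ i] forced_le_const(2) all_o that by metis
  then show ?thesis
    using all_o unfolding bad_cycle_def directed_cycle_of_def same_dir_def by simp
qed

lemma chain_if_same_dir:
  assumes r: "r1 \<in> {Af, As}" "r2 \<in> {Ad, Ao, Ap}"
    and lab: "\<forall>i<length as. lbl (as ! i) \<in> {r1, r2}"
    and has_r2: "has_lbl as r2" and dir: "same_dir vs as r2"
  shows "\<exists>\<sigma>. fwd_chain vs as \<sigma> \<or> bwd_chain vs as \<sigma>"
proof -
  obtain i0 where i0: "i0 < length as" "lbl (as ! i0) = r2"
    using has_r2 unfolding has_lbl_def by blast
  have lab': "lbl (as ! i) = r1 \<or> lbl (as ! i) = r2" if "i < length as" for i using lab that by auto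
  define c where "c \<longleftrightarrow> r1 = Af"
  define e where "e \<longleftrightarrow> \<not> (r1 = As \<and> r2 = Ad)"
  have "(\<forall>i<length as. lbl (as ! i) = r2 \<longrightarrow> fwd vs as i = e) \<or>
      (\<forall>i<length as. lbl (as ! i) = r2 \<longrightarrow> fwd vs as i = (\<not> e))"
    using dir unfolding same_dir_def by (cases e) auto
  then show ?thesis
  proof
    assume r2_dir: "\<forall>i<length as. lbl (as ! i) = r2 \<longrightarrow> fwd vs as i = e"
    have "fwd_chain vs as (\<lambda>_. c)"
      unfolding fwd_chain_def
    proof (rule closed_chainI[where P = "\<lambda>i. lbl (as ! i) = r2", OF _ _ i0])
      fix i assume "i < length as"
      then show "forced_le (lbl (as ! i)) (fwd vs as i) c c (lbl (as ! i) = r2)"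
        using lab'[of i] r2_dir r unfolding c_def e_def by (auto simp: forced_le_def)
    qed simp
    then show ?thesis by blast
  next
    assume r2_dir: "\<forall>i<length as. lbl (as ! i) = r2 \<longrightarrow> fwd vs as i = (\<not> e)"
    have "bwd_chain vs as (\<lambda>_. c)"
      unfolding bwd_chain_def
    proof (rule closed_chainI[where P = "\<lambda>i. lbl (as ! i) = r2", OF _ _ i0])
      fix i assume "i < length as"
      then show "forced_le (lbl (as ! i)) (\<not> fwd vs as i) c c (lbl (as ! i) = r2)"
        using lab'[of i] r2_dir r unfolding c_def e_def by (auto simp: forced_le_def)
    qed simp
    then show ?thesis by blast
  qed
qed

lemma bad_cycle_s_f_if_fwd_chain:
  assumes r: "r1 \<in> {Af, As}" "r2 \<in> {Ad, Ao, Ap}"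
    and lab: "\<forall>i<length as. lbl (as ! i) \<in> {r1, r2}" and chain: "fwd_chain vs as \<sigma>"
  shows "directed_cycle_of vs as r1 \<or> (has_lbl as r2 \<and> same_dir vs as r2)"
proof (cases "has_lbl as Ap")
  case True
  then have "r2 = Ap" using lab r unfolding has_lbl_def by force
  then show ?thesis
    using True fwd_chain_Ap_fwd[OF chain] unfolding same_dir_def by blast
next
  case False
  then have "\<forall>i<length as. lbl (as ! i) \<noteq> Ap" unfolding has_lbl_def by blast
  then have const: "fwd_chain vs as (\<lambda>_. \<sigma> 0)" by (rule fwd_chain_const[OF chain])
  define c where "c = \<sigma> 0"
  have step: "\<exists>st. forced_le (lbl (as ! i)) (fwd vs as i) c c st" if "i < length as" for i
    using fwd_chain_step[OF const that] unfolding c_def .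
  show ?thesis
  proof (cases "has_lbl as r2")
    case True
    then have "r2 \<in> {Ad, Ao}" using False r by (auto simp: has_lbl_def)
    then have "same_dir vs as r2"
      using same_dir_d_o_if_const_fwd_chain[OF const] by blast
    then show ?thesis using True by blast
  next
    case False
    then have all_r1: "\<forall>i<length as. lbl (as ! i) = r1"
      using lab unfolding has_lbl_def by blast
    obtain i0 where "i0 < length as" "forced_le r1 (fwd vs as i0) c c True"
      using const all_r1 unfolding fwd_chain_def closed_chain_def c_def by auto
    then have "r1 = As \<longrightarrow> c" "r1 = Af \<longrightarrow> \<not> c" using forced_le_const(3,4) by blast+
    then have "\<forall>i<length as. fwd vs as i = c"
      using step all_r1 r forced_le_const(3,4) by blast
    then show ?thesis
      using all_r1 unfolding directed_cycle_of_def same_dir_def by blast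
  qed
qed

lemma bad_cycle_if_loop:
  assumes cyc: "is_cycle C vs as" and len: "length as = 1"
    and lab: "lbl (as ! 0) \<in> {r1, r2}"
    and r: "(r1, r2) \<in> {(Ad, Ap), (Ad, Ao), (Ao, Ap)} \<union> ({Af, As} \<times> {Ad, Ao, Ap})"
  shows "bad_cycle r1 r2 vs as"
proof -
  have "length vs = 1" using is_cycle_length[OF cyc] len by simp
  moreover have "joins (as ! 0) (vs ! 0) (vs ! 0)"
    using cyc calculation unfolding is_cycle_def by auto
  ultimately have all_fwd: "\<forall>i<length as. fwd vs as i" unfolding joins_def fwd_def len by auto
  then have "same_dir vs as r" "directed_cycle_of vs as (lbl (as ! 0))" for r
    unfolding same_dir_def directed_cycle_of_def using len by auto
  moreover have "\<not> head_to_head vs as r" "has_lbl as (lbl (as ! 0))" for r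
    unfolding head_to_head_def has_lbl_def using len by auto
  moreover have "p_between_rev_o vs as"
    unfolding p_between_rev_o_def Let_def using all_fwd len by auto
  ultimately show ?thesis using lab r all_fwd unfolding bad_cycle_def by auto
qed

lemma chain_if_bad_cycle:
  assumes r: "(r1, r2) \<in> {(Ad, Ap), (Ad, Ao), (Ao, Ap)} \<union> ({Af, As} \<times> {Ad, Ao, Ap})"
    and inst: "instance_of r1 r2 C" and cyc: "is_cycle C vs as" and bad: "bad_cycle r1 r2 vs as"
  shows "\<exists>\<sigma>. fwd_chain vs as \<sigma> \<or> bwd_chain vs as \<sigma>"
proof -
  have lab: "\<forall>i<length as. lbl (as ! i) \<in> {r1, r2}" using is_cycle_labels[OF inst cyc] by blast
  have nonempty: "0 < length as" using is_cycle_length[OF cyc] by simp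
  consider "r1 = Ad" "r2 = Ap" | "r1 = Ad" "r2 = Ao" | "r1 = Ao" "r2 = Ap"
    | "r1 \<in> {Af, As}" "r2 \<in> {Ad, Ao, Ap}"
    using r by auto
  then show ?thesis
  proof cases
    case 1
    then have lab': "\<forall>i<length as. lbl (as ! i) \<in> {Ad, Ap}" using lab by simp
    have no_h2h: "\<not> head_to_head vs as Ad" and "same_dir vs as Ap"
      using bad 1 unfolding bad_cycle_def by simp_all
    then consider "\<forall>i<length as. lbl (as ! i) = Ap \<longrightarrow> fwd vs as i"
      | "\<forall>i<length as. lbl (as ! i) = Ap \<longrightarrow> \<not> fwd vs as i"
      unfolding same_dir_def by blast
    then show ?thesis
    proof cases
      case 1
      show ?thesis using fwd_chain_if_p_fwd_no_d_head_to_head[OF lab' nonempty 1 no_h2h] by blast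
    next
      case 2
      show ?thesis using bwd_chain_if_p_rev_no_d_head_to_head[OF lab' nonempty 2 no_h2h] by blast
    qed
  next
    case 2
    then have "\<forall>i<length as. lbl (as ! i) \<in> {Ad, Ao}" using lab by simp
    moreover have "same_dir vs as Ad" "same_dir vs as Ao"
      using bad 2 unfolding bad_cycle_def by simp_all
    ultimately show ?thesis by (rule chain_if_d_same_dir_o_same_dir[OF _ nonempty])
  next
    case 3
    then have lab': "\<forall>i<length as. lbl (as ! i) \<in> {Ao, Ap}" using lab by simp
    from bad 3 consider "directed_cycle_of vs as Ao"
      | "has_lbl as Ap" "\<forall>i<length as. lbl (as ! i) = Ap \<longrightarrow> fwd vs as i" "p_between_rev_o vs as"
      unfolding bad_cycle_def by auto
    then show ?thesis
    proof cases
      case 1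
      then show ?thesis by (rule chain_if_directed_cycle[rotated, OF nonempty]) simp
    next
      case 2
      then show ?thesis using fwd_chain_if_p_fwd_p_between_rev_o[OF lab'] by blast
    qed
  next
    case 4
    then have "r1 \<noteq> Ad" "r1 \<noteq> Ao" by auto
    then consider "directed_cycle_of vs as r1" | "has_lbl as r2" "same_dir vs as r2"
      using bad 4 unfolding bad_cycle_def by auto
    then show ?thesis
    proof cases
      case 1
      show ?thesis by (rule chain_if_directed_cycle[OF _ nonempty 1]) (use 4 in auto)
    next
      case 2
      show ?thesis by (rule chain_if_same_dir[OF 4 lab 2])
    qed
  qed
qed

lemma bad_cycle_if_fwd_chain:
  assumes r: "(r1, r2) \<in> {(Ad, Ap), (Ad, Ao), (Ao, Ap)} \<union> ({Af, As} \<times> {Ad, Ao, Ap})"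
    and inst: "instance_of r1 r2 C" and cyc: "is_cycle C vs as" and chain: "fwd_chain vs as \<sigma>"
  shows "bad_cycle r1 r2 vs as"
proof -
  have lab: "\<forall>i<length as. lbl (as ! i) \<in> {r1, r2}" using is_cycle_labels[OF inst cyc] by blast
  consider "r1 = Ad" "r2 = Ap" | "r1 = Ad" "r2 = Ao" | "r1 = Ao" "r2 = Ap"
    | "r1 \<in> {Af, As}" "r2 \<in> {Ad, Ao, Ap}"
    using r by auto
  then show ?thesis
  proof cases
    case 1
    then have "same_dir vs as Ap \<and> \<not> head_to_head vs as Ad"
      using p_fwd_no_d_head_to_head_if_fwd_chain[OF _ chain] lab by simp
    then show ?thesis using 1 unfolding bad_cycle_def by simp
  next
    case 2
    then have "same_dir vs as Ad \<and> same_dir vs as Ao"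
      using d_same_dir_o_same_dir_if_fwd_chain[OF _ chain] lab by simp
    then show ?thesis using 2 unfolding bad_cycle_def by simp
  next
    case 3
    then show ?thesis using bad_cycle_o_p_if_fwd_chain[OF _ chain] lab by simp
  next
    case 4
    then have "r1 \<noteq> Ad" "r1 \<noteq> Ao" by auto
    then show ?thesis
      using bad_cycle_s_f_if_fwd_chain[OF 4 lab chain] 4 unfolding bad_cycle_def by simp
  qed
qed

theorem mainTheorem5:
  fixes r1 r2 :: allen and C :: "'v constr set"
  assumes "(r1, r2) \<in> {(Ad, Ap), (Ad, Ao), (Ao, Ap)} \<union> ({Af, As} \<times> {Ad, Ao, Ap})"
    and "instance_of r1 r2 C"
  shows "satisfiable C \<longleftrightarrow> \<not> (\<exists>vs as. is_cycle C vs as \<and> bad_cycle r1 r2 vs as)"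
proof
  assume "satisfiable C"
  then show "\<not> (\<exists>vs as. is_cycle C vs as \<and> bad_cycle r1 r2 vs as)"
    using chain_if_bad_cycle[OF assms] no_chain_if_satisfiable by blast
next
  assume no_bad: "\<not> (\<exists>vs as. is_cycle C vs as \<and> bad_cycle r1 r2 vs as)"
  show "satisfiable C"
  proof (rule ccontr)
    assume "\<not> satisfiable C"
    then have "\<exists>l n a. strict_closed_walk C l n a"
      using satisfiable_if_no_strict_closed_walk assms(2) unfolding instance_of_def by blast
    then obtain l n a where shortest: "shortest_strict_closed_walk C l n a"
      using shortest_strict_closed_walk_exists by blast
    define vs where "vs = map (\<lambda>i. fst (n i)) [0..<l]"
    define as where "as = map a [0..<l]"
    have cyc: "is_cycle C vs as" and len: "length as = l"
      using shortest_strict_closed_walk_cycle[OF shortest] unfolding vs_def as_def by simp_all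
    have "bad_cycle r1 r2 vs as"
    proof (cases "l = 1")
      case True
      then show ?thesis
        using bad_cycle_if_loop[OF cyc _ _ assms(1)] is_cycle_labels[OF assms(2) cyc, of 0] len
        by simp
    next
      case False
      then have "fwd_chain vs as (\<lambda>i. snd (n i))"
        using shortest_strict_closed_walk_fwd_chain[OF shortest] is_cycle_length[OF cyc] len
        unfolding vs_def as_def by simp
      then show ?thesis by (rule bad_cycle_if_fwd_chain[OF assms cyc])
    qed
    then show False using no_bad cyc by blast
  qed
qed

end
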